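(* Let $q>2$ be a prime power, $R=M_2(\mathbb F_q)$, $U_R=\mathrm{GL}_2(\mathbb F_q)$, $\alpha\in(0,1)$, and let $\pi$ be the stationary distribution of the Markov chain $(X^U_t)$ on $R$ defined below. Let $D=q^3+q^2-q+(q^2-1)(q^2-q)\alpha$. Then \[\pi(x)=\begin{cases}\dfrac{\alpha}{D}, & x\in U_R,\\[2mm] \dfrac{q^2\alpha}{(1+(q^2-1)\alpha)\,D}, & x\notin U_R,\ x\ne0,\\[2mm] \dfrac{q^3+q^2-q-q(q^2-1)\alpha}{(1+(q^2-1)\alpha)\,D}, & x=0.\end{cases}\]
   Context: The chain $(X^U_t)$ on $R$: at each step an independent coin with Heads probability $\alpha$ is tossed; on Heads, $X_{t+1}=X_t+Y$ with $Y$ uniform on $R$; on Tails, $X_{t+1}=Z\cdot X_t$ with $Z$ uniform on $R$ (all independent). *)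

theory Defs
  imports "HOL-Analysis.Analysis" "HOL-Probability.Probability"
begin

definition chain_step :: "real \<Rightarrow> ('a::{field,finite})^2^2 \<Rightarrow> ('a^2^2) pmf" where
  "chain_step \<alpha> x =
     bind_pmf (bernoulli_pmf \<alpha>)
       (\<lambda>heads. if heads then map_pmf (\<lambda>y. x + y) (pmf_of_set UNIV)
                else map_pmf (\<lambda>z. z ** x) (pmf_of_set UNIV))"

definition is_stationary :: "real \<Rightarrow> (('a::{field,finite})^2^2) pmf \<Rightarrow> bool" where
  "is_stationary \<alpha> \<pi> \<longleftrightarrow> bind_pmf \<pi> (chain_step \<alpha>) = \<pi>"

end

theory Submission
  imports Defs
begin

text \<open>
  Stationarity reads \<open>\<pi>(y) = (\<alpha> + (1 - \<alpha>) \<Sum>\<^sub>x \<pi>(x) #{z. z x = y}) / q\<^sup>4\<close>.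
  The fibre \<open>#{z. z x = y}\<close> is 1 for invertible \<open>x\<close>; for singular \<open>x\<close> it is the size
  of the left annihilator of \<open>x\<close> if \<open>y\<close> lies in the left ideal \<open>R x\<close>, and 0 otherwise.
  Hence \<open>\<pi>\<close> is constant on \<open>GL\<^sub>2\<close>, which yields \<open>\<alpha> / D\<close>. A rank-one \<open>y\<close> receives mass
  only from \<open>GL\<^sub>2\<close> and, with weight \<open>q\<^sup>2\<close>, from the \<open>q\<^sup>2 - 1\<close> nonzero elements of \<open>R y\<close>;
  these generate the same left ideal as \<open>y\<close>, so they carry the same mass, and the
  stationarity equation at \<open>y\<close> becomes linear in \<open>\<pi>(y)\<close>. The mass at 0 is what remains.
\<close>

lemma matrix_add_rdistrib: "(A + B) ** C = A ** C + B ** C"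
  by (vector matrix_matrix_mult_def sum.distrib[symmetric] field_simps)

lemma matrix_matrix_mult_row: "(A ** B) $ i = A $ i v* B"
  by (simp add: matrix_matrix_mult_def vector_matrix_mult_def vec_eq_iff)

lemma card_vec_all: "card {v :: 'b^'n. \<forall>i. P (v $ i)} = card {a. P a} ^ CARD('n)"
proof -
  have "bij_betw vec_nth {v :: 'b^'n. \<forall>i. P (v $ i)} (Pi\<^sub>E UNIV (\<lambda>_. {a. P a}))"
    by (rule bij_betw_byWitness[where f' = vec_lambda]) (auto simp: PiE_def extensional_def)
  then show ?thesis
    by (simp add: bij_betw_same_card card_PiE)
qed

definition left_ideal :: "'a::semiring_1^'n^'n \<Rightarrow> ('a^'n^'n) set" where
  "left_ideal x = range (\<lambda>z. z ** x)"

definition left_annihilator :: "'a::semiring_1^'n^'n \<Rightarrow> ('a^'n^'n) set" where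
  "left_annihilator x = {z. z ** x = 0}"

lemma zero_in_left_ideal: "0 \<in> left_ideal x"
  unfolding left_ideal_def by (metis rangeI times0_left)

lemma self_in_left_ideal: "x \<in> left_ideal x"
  unfolding left_ideal_def by (metis rangeI matrix_mul_lid)

lemma left_ideal_subset: "x \<in> left_ideal y \<Longrightarrow> left_ideal x \<subseteq> left_ideal y"
  unfolding left_ideal_def by (auto simp: matrix_mul_assoc)

lemma not_invertible_left_ideal:
  fixes x y :: "'a::field^'n^'n"
  shows "x \<in> left_ideal y \<Longrightarrow> \<not> invertible y \<Longrightarrow> \<not> invertible x"
  unfolding left_ideal_def by (auto simp: invertible_det_nz det_mul)

lemma card_fiber_matrix_mult:
  fixes x y :: "'a::ring_1^'n^'n"
  shows "card {z. z ** x = y} = (if y \<in> left_ideal x then card (left_annihilator x) else 0)"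
proof (cases "y \<in> left_ideal x")
  case True
  then obtain z0 where z0: "z0 ** x = y"
    by (auto simp: left_ideal_def)
  have "{z. z ** x = y} = (\<lambda>z. z + z0) ` left_annihilator x"
  proof (intro set_eqI iffI)
    fix z assume "z \<in> {z. z ** x = y}"
    then have "(z - z0) ** x = 0"
      using z0 matrix_add_rdistrib[of "z - z0" z0 x] by simp
    then show "z \<in> (\<lambda>z. z + z0) ` left_annihilator x"
      by (intro image_eqI[of _ _ "z - z0"]) (auto simp: left_annihilator_def)
  qed (auto simp: z0 matrix_add_rdistrib left_annihilator_def)
  then show ?thesis
    using True by (simp add: card_image)
next
  case False
  then have "{z. z ** x = y} = {}"
    by (auto simp: left_ideal_def)
  then show ?thesis
    using False by simp
qed

lemma card_left_ideal_mult_card_annihilator: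
  fixes x :: "'a::{ring_1,finite}^'n^'n"
  shows "card (left_ideal x) * card (left_annihilator x) = CARD('a^'n^'n)"
proof -
  have "CARD('a^'n^'n) = (\<Sum>y\<in>UNIV. card {z :: 'a^'n^'n. z ** x = y})"
    using sum.group[of "UNIV :: ('a^'n^'n) set" UNIV "\<lambda>z. z ** x" "\<lambda>_. 1::nat"] by simp
  also have "\<dots> = (\<Sum>y\<in>left_ideal x. card (left_annihilator x))"
    by (simp add: card_fiber_matrix_mult sum.If_cases Int_absorb1)
  finally show ?thesis
    by simp
qed

lemma card_fiber_invertible:
  fixes x y :: "'a::comm_ring_1^'n^'n"
  assumes "invertible x"
  shows "card {z. z ** x = y} = 1"
proof -
  obtain x' where "x ** x' = mat 1" "x' ** x = mat 1"
    using assms unfolding invertible_def by blast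
  then have "{z. z ** x = y} = {y ** x'}"
    by (auto simp: matrix_mul_assoc[symmetric])
  then show ?thesis
    by simp
qed

lemma card_fiber_onto_invertible:
  fixes x y :: "'a::field^'n^'n"
  assumes "invertible y"
  shows "card {z. z ** x = y} = (if invertible x then 1 else 0)"
  using assms card_fiber_invertible[of x y] card_fiber_matrix_mult[of x y]
    not_invertible_left_ideal[of y x] by auto

lemma card_vec_2: "card {v :: 'b::zero^2. P (v $ 1) (v $ 2)} = card {(r, s). P r s}"
proof -
  have "bij_betw (\<lambda>v. (v $ 1, v $ 2)) {v :: 'b^2. P (v $ 1) (v $ 2)} {(r, s). P r s}"
    by (rule bij_betw_byWitness[where f' = "\<lambda>(r, s). vector [r, s]"])
      (auto simp: vec_eq_iff forall_2)
  then show ?thesis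
    by (rule bij_betw_same_card)
qed

lemma collinear_2_iff:
  fixes r w :: "'a::field^2"
  assumes "w \<noteq> 0"
  shows "r $ 1 * w $ 2 = r $ 2 * w $ 1 \<longleftrightarrow> r \<in> range (\<lambda>k. k *s w)"
proof
  assume collinear: "r $ 1 * w $ 2 = r $ 2 * w $ 1"
  show "r \<in> range (\<lambda>k. k *s w)"
  proof (cases "w $ 1 = 0")
    case True
    then have "w $ 2 \<noteq> 0"
      using assms by (auto simp: vec_eq_iff forall_2)
    then have "r = (r $ 2 / w $ 2) *s w"
      using collinear True by (auto simp: vec_eq_iff forall_2 field_simps)
    then show ?thesis
      by blast
  next
    case False
    then have "r = (r $ 1 / w $ 1) *s w"
      using collinear by (auto simp: vec_eq_iff forall_2 field_simps)
    then show ?thesis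
      by blast
  qed
qed auto

lemma card_range_scaled:
  fixes w :: "'a::{field,finite}^'n"
  assumes "w \<noteq> 0"
  shows "card (range (\<lambda>k. k *s w)) = CARD('a)"
proof -
  obtain i where "w $ i \<noteq> 0"
    using assms by (auto simp: vec_eq_iff)
  then have "inj (\<lambda>k. k *s w)"
    by (auto intro!: injI simp: vec_eq_iff)
  then show ?thesis
    by (simp add: card_image)
qed

lemma vector_matrix_mult_2: "(r v* x) $ j = r $ 1 * x $ 1 $ j + r $ 2 * x $ 2 $ j"
  for x :: "'a::semiring_1^'n^2"
  by (simp add: vector_matrix_mult_def UNIV_2)

lemma collinear_if_left_null:
  fixes x :: "'a::field^2^2"
  assumes "x \<noteq> 0" and "r v* x = 0" and "w v* x = 0"
  shows "r $ 1 * w $ 2 = r $ 2 * w $ 1"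
proof (rule ccontr)
  let ?m = "vector [r, w] :: 'a^2^2"
  assume "r $ 1 * w $ 2 \<noteq> r $ 2 * w $ 1"
  then have "invertible ?m"
    by (simp add: invertible_det_nz det_2)
  then obtain m' where "m' ** ?m = mat 1"
    unfolding invertible_def by blast
  moreover have "?m ** x = 0"
    using assms(2,3) by (simp add: vec_eq_iff forall_2 matrix_matrix_mult_row)
  ultimately have "x = 0"
    by (metis matrix_mul_assoc matrix_mul_lid times0_right)
  with assms(1) show False ..
qed

text \<open>The witnesses are the rows of the adjugate of \<open>x\<close>.\<close>

lemma left_null_vector_exists:
  fixes x :: "'a::field^2^2"
  assumes "det x = 0" and "x \<noteq> 0"
  obtains w where "w \<noteq> 0" and "w v* x = 0"
proof (cases "x $ 1 $ 2 = 0 \<and> x $ 2 $ 2 = 0")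
  case True
  with assms have "vector [- x $ 2 $ 1, x $ 1 $ 1] \<noteq> (0 :: 'a^2)"
    by (auto simp: vec_eq_iff forall_2)
  moreover have "vector [- x $ 2 $ 1, x $ 1 $ 1] v* x = 0"
    using True by (simp add: vec_eq_iff forall_2 vector_matrix_mult_2 algebra_simps)
  ultimately show ?thesis
    using that by blast
next
  case False
  then have "vector [x $ 2 $ 2, - x $ 1 $ 2] \<noteq> (0 :: 'a^2)"
    by (auto simp: vec_eq_iff forall_2)
  moreover have "vector [x $ 2 $ 2, - x $ 1 $ 2] v* x = 0"
    using assms(1) by (simp add: vec_eq_iff forall_2 vector_matrix_mult_2 det_2 algebra_simps)
  ultimately show ?thesis
    using that by blast
qed

lemma card_left_null_space_2x2:
  fixes x :: "'a::{field,finite}^2^2"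
  assumes "det x = 0" and "x \<noteq> 0"
  shows "card {r. r v* x = 0} = CARD('a)"
proof -
  obtain w where w: "w \<noteq> 0" "w v* x = 0"
    using left_null_vector_exists[OF assms] .
  have scale: "(k *s w) v* x = k *s (w v* x)" for k
    by (simp add: vector_matrix_mult_def vec_eq_iff sum_distrib_left mult.assoc)
  have "{r. r v* x = 0} = range (\<lambda>k. k *s w)"
  proof (intro set_eqI iffI)
    fix r assume "r \<in> {r. r v* x = 0}"
    then show "r \<in> range (\<lambda>k. k *s w)"
      using collinear_if_left_null[OF assms(2) _ w(2)] collinear_2_iff[OF w(1)] by blast
  next
    fix r assume "r \<in> range (\<lambda>k. k *s w)"
    then show "r \<in> {r. r v* x = 0}"
      using w(2) scale by auto
  qed
  then show ?thesis
    using card_range_scaled[OF w(1)] by simp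
qed

lemma card_left_annihilator_2x2:
  fixes x :: "'a::{field,finite}^2^2"
  assumes "x \<noteq> 0" and "\<not> invertible x"
  shows "card (left_annihilator x) = CARD('a)^2"
proof -
  have "left_annihilator x = {z. \<forall>i. z $ i v* x = 0}"
    by (simp add: left_annihilator_def vec_eq_iff[of "_ ** x"] matrix_matrix_mult_row)
  then show ?thesis
    using assms card_left_null_space_2x2[of x]
    by (simp add: card_vec_all[of "\<lambda>r. r v* x = 0"] invertible_det_nz)
qed

lemma card_left_ideal_2x2:
  fixes x :: "'a::{field,finite}^2^2"
  assumes "x \<noteq> 0" and "\<not> invertible x"
  shows "card (left_ideal x) = CARD('a)^2"
proof -
  have "card (left_ideal x) * CARD('a)^2 = CARD('a)^2 * CARD('a)^2"
    using card_left_ideal_mult_card_annihilator[of x] card_left_annihilator_2x2[OF assms]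
    by (simp flip: power_mult power_add)
  then show ?thesis
    by (rule mult_right_cancel[THEN iffD1, rotated]) simp
qed

lemma left_ideal_eq_2x2:
  fixes x y :: "'a::{field,finite}^2^2"
  assumes "x \<noteq> 0" "\<not> invertible x" "y \<noteq> 0" "\<not> invertible y" and "x \<in> left_ideal y"
  shows "left_ideal x = left_ideal y"
  using assms card_left_ideal_2x2[of x] card_left_ideal_2x2[of y]
  by (intro card_subset_eq left_ideal_subset) auto

lemma card_Compl: "card (- A) = CARD('a) - card A" for A :: "'a::finite set"
  by (simp add: Compl_eq_Diff_UNIV card_Diff_subset)

lemma card_invertible_2x2:
  "card {x :: 'a::{field,finite}^2^2. invertible x} = (CARD('a)^2 - 1) * (CARD('a)^2 - CARD('a))"
proof -
  have "card {x :: 'a^2^2. invertible x} = card {(r :: 'a^2, s). r \<noteq> 0 \<and> s \<notin> range (\<lambda>k. k *s r)}"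
  proof -
    have "invertible x \<longleftrightarrow> x $ 1 \<noteq> 0 \<and> x $ 2 \<notin> range (\<lambda>k. k *s x $ 1)" for x :: "'a^2^2"
      using collinear_2_iff[of "x $ 1" "x $ 2"]
      by (auto simp: invertible_det_nz det_2 algebra_simps)
    then show ?thesis
      using card_vec_2[of "\<lambda>r s. r \<noteq> 0 \<and> s \<notin> range (\<lambda>k. k *s r)"] by simp
  qed
  also have "{(r :: 'a^2, s). r \<noteq> 0 \<and> s \<notin> range (\<lambda>k. k *s r)} = Sigma (- {0}) (\<lambda>r. - range (\<lambda>k. k *s r))"
    by auto
  also have "card \<dots> = (\<Sum>r \<in> - {0 :: 'a^2}. CARD('a)^2 - CARD('a))"
    by (simp add: card_SigmaI card_Compl card_range_scaled)
  also have "\<dots> = (CARD('a)^2 - 1) * (CARD('a)^2 - CARD('a))"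
    by (simp add: card_Compl)
  finally show ?thesis .
qed

lemma card_fiber_onto_rank_one_2x2:
  fixes x y :: "'a::{field,finite}^2^2"
  assumes "y \<noteq> 0" and "\<not> invertible y"
  shows "card {z. z ** x = y} =
    (if invertible x then 1 else if x \<in> left_ideal y - {0} then CARD('a)^2 else 0)"
proof -
  consider "invertible x" | "x = 0" | "x \<noteq> 0" "\<not> invertible x"
    by blast
  then show ?thesis
  proof cases
    case 1
    then show ?thesis
      by (simp add: card_fiber_invertible)
  next
    case 2
    then show ?thesis
      using assms(1) by (simp add: invertible_det_nz det_2)
  next
    case 3
    then have "y \<in> left_ideal x \<longleftrightarrow> x \<in> left_ideal y"
      using assms left_ideal_eq_2x2 self_in_left_ideal by metis
    then show ?thesis
      using 3 card_fiber_matrix_mult[of x y] card_left_annihilator_2x2[of x] by simp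
  qed
qed

lemma pmf_chain_step:
  fixes x y :: "'a::{field,finite}^2^2"
  assumes "0 \<le> \<alpha>" and "\<alpha> \<le> 1"
  shows "pmf (chain_step \<alpha> x) y = (\<alpha> + (1 - \<alpha>) * card {z. z ** x = y}) / real CARD('a)^4"
proof -
  have "{z. x + z = y} = {y - x}"
    by (auto simp: algebra_simps)
  then show ?thesis
    using assms
    by (simp add: chain_step_def pmf_bind pmf_map measure_pmf_of_set vimage_def add_divide_distrib
        flip: power_mult)
qed

lemma pmf_zero_by_total_mass:
  fixes p :: "('a::{field,finite}^2^2) pmf"
  assumes "\<And>x. invertible x \<Longrightarrow> pmf p x = a"
    and "\<And>x. x \<noteq> 0 \<Longrightarrow> \<not> invertible x \<Longrightarrow> pmf p x = b"
  defines "G \<equiv> real (card {x :: 'a^2^2. invertible x})"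
  shows "pmf p 0 = 1 - G * a - (real CARD('a)^4 - G - 1) * b"
proof -
  define U where "U = {x :: 'a^2^2. invertible x}"
  define S where "S = {x :: 'a^2^2. x \<noteq> 0 \<and> \<not> invertible x}"
  have partition: "UNIV = U \<union> (insert 0 S)" and disjoint: "U \<inter> insert 0 S = {}" "0 \<notin> S"
    by (auto simp: U_def S_def invertible_det_nz det_2)
  have "card S = CARD('a^2^2) - card U - 1"
    using partition disjoint card_Un_disjoint[of U "insert 0 S"] by simp
  moreover have "card U + 1 \<le> CARD('a^2^2)"
    using partition disjoint card_Un_disjoint[of U "insert 0 S"] by simp
  ultimately have card_S: "real (card S) = real CARD('a)^4 - G - 1"
    by (simp add: G_def U_def of_nat_diff flip: power_mult)
  have "1 = (\<Sum>x\<in>UNIV. pmf p x)"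
    by (simp add: sum_pmf_eq_1)
  also have "\<dots> = (\<Sum>x\<in>U. pmf p x) + (\<Sum>x\<in>insert 0 S. pmf p x)"
    unfolding partition using disjoint by (intro sum.union_disjoint) auto
  also have "(\<Sum>x\<in>insert 0 S. pmf p x) = pmf p 0 + (\<Sum>x\<in>S. pmf p x)"
    using disjoint by simp
  also have "(\<Sum>x\<in>U. pmf p x) = G * a"
    using assms(1) by (simp add: U_def G_def)
  also have "(\<Sum>x\<in>S. pmf p x) = (real CARD('a)^4 - G - 1) * b"
    using assms(2) card_S by (simp add: S_def)
  finally show ?thesis
    by simp
qed

locale stationary_matrix_chain =
  fixes \<alpha> :: real and \<pi> :: "('a::{field,finite}^2^2) pmf"
  assumes alpha_nonneg: "0 \<le> \<alpha>" and alpha_le_one: "\<alpha> \<le> 1" and stationary: "is_stationary \<alpha> \<pi>"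
begin

lemma pmf_stationary:
  "pmf \<pi> y = (\<alpha> + (1 - \<alpha>) * (\<Sum>x\<in>UNIV. pmf \<pi> x * card {z. z ** x = y})) / real CARD('a)^4"
proof -
  have "pmf \<pi> y = pmf (bind_pmf \<pi> (chain_step \<alpha>)) y"
    using stationary by (simp add: is_stationary_def)
  also have "\<dots> = (\<Sum>x\<in>UNIV. pmf \<pi> x * pmf (chain_step \<alpha> x) y)"
    unfolding pmf_bind by (subst integral_measure_pmf_real) (auto simp: mult.commute)
  also have "\<dots> = (\<Sum>x\<in>UNIV. pmf \<pi> x * \<alpha> + (1 - \<alpha>) * (pmf \<pi> x * card {z. z ** x = y}))
      / real CARD('a)^4"
    by (simp add: pmf_chain_step alpha_nonneg alpha_le_one sum_divide_distrib algebra_simps)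
  also have "\<dots> = (\<alpha> + (1 - \<alpha>) * (\<Sum>x\<in>UNIV. pmf \<pi> x * card {z. z ** x = y})) / real CARD('a)^4"
    by (simp add: sum.distrib sum_distrib_left[symmetric] sum_distrib_right[symmetric] sum_pmf_eq_1)
  finally show ?thesis .
qed

lemma pmf_invertible_eq_mass:
  assumes "invertible y"
  shows "pmf \<pi> y = (\<alpha> + (1 - \<alpha>) * (\<Sum>x | invertible x. pmf \<pi> x)) / real CARD('a)^4"
  using pmf_stationary[of y]
  by (simp add: card_fiber_onto_invertible[OF assms] sum.If_cases if_distrib cong: if_cong)

lemma pmf_invertible:
  assumes "invertible y"
  shows "pmf \<pi> y = \<alpha> / (real CARD('a)^4 - (1 - \<alpha>) * card {x :: 'a^2^2. invertible x})"
proof -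
  define U where "U = {x :: 'a^2^2. invertible x}"
  define a where "a = (\<alpha> + (1 - \<alpha>) * (\<Sum>x\<in>U. pmf \<pi> x)) / real CARD('a)^4"
  have pmf_U: "pmf \<pi> x = a" if "x \<in> U" for x
    unfolding a_def U_def using that by (intro pmf_invertible_eq_mass) (simp add: U_def)
  have "a * real CARD('a)^4 = \<alpha> + (1 - \<alpha>) * (\<Sum>x\<in>U. pmf \<pi> x)"
    by (simp add: a_def)
  also have "(\<Sum>x\<in>U. pmf \<pi> x) = card U * a"
    using pmf_U by simp
  finally have a_eq: "a * (real CARD('a)^4 - (1 - \<alpha>) * card U) = \<alpha>"
    by (simp add: algebra_simps)
  have "0 \<notin> U"
    by (simp add: U_def invertible_det_nz det_2)
  then have "card U < CARD('a^2^2)"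
    using psubset_card_mono[of UNIV U] by auto
  then have "real (card U) < real CARD('a)^4"
    by (simp flip: power_mult of_nat_power)
  then have "(1 - \<alpha>) * card U < real CARD('a)^4"
    using alpha_nonneg alpha_le_one
    by (smt (verit) mult_left_le_one_le of_nat_0_le_iff)
  then show ?thesis
    using a_eq pmf_U assms by (simp add: U_def field_simps)
qed

lemma pmf_rank_one_eq_mass:
  assumes "y \<noteq> 0" and "\<not> invertible y" and "invertible u"
  shows "pmf \<pi> y = pmf \<pi> u + (1 - \<alpha>) / real CARD('a)^2 * (\<Sum>x\<in>left_ideal y - {0}. pmf \<pi> x)"
proof -
  let ?m = "\<Sum>x | invertible x. pmf \<pi> x"
  let ?s = "\<Sum>x\<in>left_ideal y - {0}. pmf \<pi> x"
  have "(\<Sum>x\<in>UNIV. pmf \<pi> x * card {z. z ** x = y})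
      = (\<Sum>x\<in>UNIV. (if invertible x then pmf \<pi> x else 0)
          + real CARD('a)^2 * (if x \<in> left_ideal y - {0} then pmf \<pi> x else 0))"
    by (rule sum.cong)
      (auto simp: card_fiber_onto_rank_one_2x2[OF assms(1,2)] dest: not_invertible_left_ideal[OF _ assms(2)])
  also have "\<dots> = ?m + real CARD('a)^2 * ?s"
    by (simp add: sum.distrib sum_distrib_left[symmetric] sum.If_cases set_diff_eq)
  finally have "pmf \<pi> y = (\<alpha> + (1 - \<alpha>) * (?m + real CARD('a)^2 * ?s)) / real CARD('a)^4"
    using pmf_stationary[of y] by simp
  also have "\<dots> = (\<alpha> + (1 - \<alpha>) * ?m) / real CARD('a)^4 + (1 - \<alpha>) / real CARD('a)^2 * ?s"
    by (simp add: field_simps power4_eq_xxxx power2_eq_square)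
  also have "(\<alpha> + (1 - \<alpha>) * ?m) / real CARD('a)^4 = pmf \<pi> u"
    by (rule pmf_invertible_eq_mass[symmetric, OF assms(3)])
  finally show ?thesis .
qed

lemma pmf_rank_one:
  assumes "y \<noteq> 0" and "\<not> invertible y" and "invertible u"
  shows "pmf \<pi> y = real CARD('a)^2 * pmf \<pi> u / (1 + (real CARD('a)^2 - 1) * \<alpha>)"
proof -
  let ?E = "left_ideal y - {0}"
  have pmf_E: "pmf \<pi> x = pmf \<pi> y" if "x \<in> ?E" for x
  proof -
    have x: "x \<noteq> 0" "\<not> invertible x"
      using that not_invertible_left_ideal[OF _ assms(2)] by auto
    then have "left_ideal x = left_ideal y"
      using that assms(1,2) left_ideal_eq_2x2 by blast
    then show ?thesis
      using pmf_rank_one_eq_mass[OF x assms(3)] pmf_rank_one_eq_mass[OF assms] by simp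
  qed
  have "card ?E = CARD('a)^2 - 1"
    using card_left_ideal_2x2[OF assms(1,2)] zero_in_left_ideal[of y] by (simp add: card_Diff_singleton)
  then have "real (card ?E) = real CARD('a)^2 - 1"
    by (simp add: of_nat_diff)
  then have mass_E: "(\<Sum>x\<in>?E. pmf \<pi> x) = (real CARD('a)^2 - 1) * pmf \<pi> y"
    using pmf_E by simp
  have "pmf \<pi> y = pmf \<pi> u + (1 - \<alpha>) / real CARD('a)^2 * ((real CARD('a)^2 - 1) * pmf \<pi> y)"
    using pmf_rank_one_eq_mass[OF assms] unfolding mass_E .
  then have "pmf \<pi> y * (1 + (real CARD('a)^2 - 1) * \<alpha>) = real CARD('a)^2 * pmf \<pi> u"
    by (simp add: field_simps)
  moreover have "1 + (real CARD('a)^2 - 1) * \<alpha> > 0"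
    using alpha_nonneg by (simp add: add_pos_nonneg)
  ultimately show ?thesis
    by (simp add: field_simps)
qed

end

lemma zero_mass_formula:
  fixes q \<alpha> :: real
  assumes "q \<ge> 1" and "\<alpha> \<ge> 0"
  defines "D \<equiv> q^3 + q^2 - q + (q^2 - 1) * (q^2 - q) * \<alpha>" and "K \<equiv> 1 + (q^2 - 1) * \<alpha>"
  shows "1 - (q^2 - 1) * (q^2 - q) * (\<alpha> / D) - (q^4 - (q^2 - 1) * (q^2 - q) - 1) * (q^2 * \<alpha> / (K * D))
    = (q^3 + q^2 - q - q * (q^2 - 1) * \<alpha>) / (K * D)"
proof -
  have q_powers: "q \<le> q^2" "q \<le> q^3"
    using power_increasing[of 1 _ q] assms(1) by simp_all
  then have "0 \<le> (q^2 - 1) * \<alpha>" "0 \<le> (q^2 - 1) * (q^2 - q) * \<alpha>"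
    using assms(1,2) by simp_all
  then have "D > 0" and "K > 0"
    using assms(1) q_powers unfolding D_def K_def by linarith+
  then have "1 - (q^2 - 1) * (q^2 - q) * (\<alpha> / D) - (q^4 - (q^2 - 1) * (q^2 - q) - 1) * (q^2 * \<alpha> / (K * D))
      = (K * D - (q^2 - 1) * (q^2 - q) * \<alpha> * K - (q^4 - (q^2 - 1) * (q^2 - q) - 1) * q^2 * \<alpha>) / (K * D)"
    by (simp add: field_simps)
  also have "K * D - (q^2 - 1) * (q^2 - q) * \<alpha> * K - (q^4 - (q^2 - 1) * (q^2 - q) - 1) * q^2 * \<alpha>
      = q^3 + q^2 - q - q * (q^2 - 1) * \<alpha>"
    unfolding D_def K_def by algebra
  finally show ?thesis .
qed

theorem proposition5p2:
  fixes \<alpha> :: real and \<pi> :: "(('a::{field,finite})^2^2) pmf" and x :: "'a^2^2"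
  assumes "CARD('a) > 2" and "0 < \<alpha>" and "\<alpha> < 1" and "is_stationary \<alpha> \<pi>"
  defines "q \<equiv> real CARD('a)"
  defines "D \<equiv> q^3 + q^2 - q + (q^2 - 1) * (q^2 - q) * \<alpha>"
  shows "pmf \<pi> x =
    (if invertible x then \<alpha> / D
     else if x \<noteq> 0 then q^2 * \<alpha> / ((1 + (q^2 - 1) * \<alpha>) * D)
     else (q^3 + q^2 - q - q * (q^2 - 1) * \<alpha>) / ((1 + (q^2 - 1) * \<alpha>) * D))"
proof -
  interpret stationary_matrix_chain \<alpha> \<pi>
    using assms(2-4) by unfold_locales auto
  have q_ge_1: "q \<ge> 1"
    unfolding q_def by (simp add: Suc_le_eq)
  have card_GL: "real (card {x :: 'a^2^2. invertible x}) = (q^2 - 1) * (q^2 - q)"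
    using q_ge_1 unfolding card_invertible_2x2 q_def by (simp add: of_nat_diff power2_eq_square)
  have pmf_GL: "pmf \<pi> y = \<alpha> / D" if "invertible y" for y
    using pmf_invertible[OF that] unfolding card_GL D_def q_def
    by (simp add: algebra_simps power2_eq_square power3_eq_cube power4_eq_xxxx)
  have pmf_rank_1: "pmf \<pi> y = q^2 * \<alpha> / ((1 + (q^2 - 1) * \<alpha>) * D)"
    if "y \<noteq> 0" and "\<not> invertible y" for y
    using pmf_rank_one[OF that, of "mat 1"] pmf_GL[of "mat 1"] unfolding q_def
    by (simp add: invertible_det_nz)
  have "pmf \<pi> 0 = 1 - (q^2 - 1) * (q^2 - q) * (\<alpha> / D)
      - (q^4 - (q^2 - 1) * (q^2 - q) - 1) * (q^2 * \<alpha> / ((1 + (q^2 - 1) * \<alpha>) * D))"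
    using pmf_zero_by_total_mass[OF pmf_GL pmf_rank_1] unfolding card_GL q_def .
  also have "\<dots> = (q^3 + q^2 - q - q * (q^2 - 1) * \<alpha>) / ((1 + (q^2 - 1) * \<alpha>) * D)"
    using zero_mass_formula[OF q_ge_1] assms(2) unfolding D_def by simp
  finally show ?thesis
    using pmf_GL pmf_rank_1 by auto
qed

end
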